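(* Let $D\subseteq(\omega+1)^\omega$ be a wide set. Then there are topological embeddings $\varphi:(\omega+1)^\omega\to D$ and $\psi:\omega^\omega\to P[D]$ such that $\psi\circ P=(P\restriction D)\circ\varphi$.
   Context: $(\omega+1)^\omega$ carries the product of the order topologies on $\omega+1$ (Cantor topology); $D$ carries the subspace topology; $\omega^\omega$ the usual Baire space topology and $P[D]\subseteq\omega^\omega$ the subspace topology. For $\tau\in(\omega+1)^{<\omega}$, $[\tau]=\{x:\tau\subseteq x\}$; for a tree $T\subseteq(\omega+1)^{<\omega}$, $\lim T=\{x:\forall n\ x\restriction n\in T\}$. $P:(\omega+1)^\omega\to\omega^\omega$ is given by $P(x)(n)=x(n)+1$ if $x(n)<\omega$, $P(x)(n)=0$ if $x(n)=\omega$. A tree $T$ is wide if every $\tau\in T$ has an extension $\tau'\in T$ such that $\lim T\cap[\tau']$ is nowhere dense (Cantor topology) in $\lim T\cap[\tau]$; a set is wide if it is $\lim T$ for a wide tree $T$. *)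

theory Defs
  imports "HOL-Analysis.Analysis" "HOL-Library.Sublist"
begin

text \<open>omega+1 is modelled by enat (infinity = omega), carrying its order topology
  (the linorder_topology instance of enat).\<close>

definition cantor_top :: "(nat \<Rightarrow> enat) topology" where
  "cantor_top = product_topology (\<lambda>_. euclidean) UNIV"

definition baire_top :: "(nat \<Rightarrow> nat) topology" where
  "baire_top = product_topology (\<lambda>_. discrete_topology UNIV) UNIV"

definition restr :: "(nat \<Rightarrow> 'a) \<Rightarrow> nat \<Rightarrow> 'a list" where
  "restr x n = map x [0..<n]"

definition cyl :: "enat list \<Rightarrow> (nat \<Rightarrow> enat) set" where
  "cyl \<tau> = {x. restr x (length \<tau>) = \<tau>}"

definition lim_tree :: "enat list set \<Rightarrow> (nat \<Rightarrow> enat) set" where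
  "lim_tree T = {x. \<forall>n. restr x n \<in> T}"

definition is_tree :: "'a list set \<Rightarrow> bool" where
  "is_tree T \<longleftrightarrow> (\<forall>\<sigma> \<tau>. \<tau> \<in> T \<and> prefix \<sigma> \<tau> \<longrightarrow> \<sigma> \<in> T)"

definition nowhere_dense_in :: "'a topology \<Rightarrow> 'a set \<Rightarrow> bool" where
  "nowhere_dense_in X A \<longleftrightarrow> A \<subseteq> topspace X \<and> X interior_of (X closure_of A) = {}"

definition wide_tree :: "enat list set \<Rightarrow> bool" where
  "wide_tree T \<longleftrightarrow> is_tree T \<and> [] \<in> T \<and> (\<forall>\<tau>\<in>T. \<exists>a. \<tau> @ [a] \<in> T) \<and>
     (\<forall>\<tau>\<in>T. \<exists>\<tau>'\<in>T. prefix \<tau> \<tau>' \<and>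
        nowhere_dense_in (subtopology cantor_top (lim_tree T \<inter> cyl \<tau>))
                         (lim_tree T \<inter> cyl \<tau>'))"

definition wide_set :: "(nat \<Rightarrow> enat) set \<Rightarrow> bool" where
  "wide_set D \<longleftrightarrow> (\<exists>T. wide_tree T \<and> D = lim_tree T)"

definition P_map :: "(nat \<Rightarrow> enat) \<Rightarrow> (nat \<Rightarrow> nat)" where
  "P_map x = (\<lambda>n. if x n = \<infinity> then 0 else the_enat (x n) + 1)"

end

theory Submission
  imports Defs
begin

text \<open>
  Let \<open>D = lim T\<close> for a wide tree \<open>T\<close>, and fix for every node \<open>\<sigma>\<close> an extension \<open>thin \<sigma>\<close> whose cone
  is nowhere dense in the cone of \<open>\<sigma>\<close>.  The embedding \<open>\<phi>\<close> reads its argument digit by digit while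
  descending in \<open>T\<close>.  The digit \<open>\<omega>\<close> leads from \<open>\<sigma>\<close> to \<open>thin \<sigma>\<close>.  A finite digit \<open>c\<close> leads to a node
  off \<open>thin \<sigma>\<close> which, on its first \<open>|thin \<sigma>| + c\<close> entries and after truncation at \<open>c\<close>, agrees with
  the point the construction produces below \<open>thin \<sigma>\<close> from the remaining digits; nowhere density
  provides such nodes.  So as \<open>c \<rightarrow> \<omega>\<close> these points converge to the point obtained from the
  digit \<open>\<omega>\<close>, which is continuity of \<open>\<phi>\<close>, and compactness of \<open>(\<omega>+1)\<^sup>\<omega>\<close> turns the continuous
  injection \<open>\<phi>\<close> into an embedding.

  Since the target node depends on the construction itself, one builds approximations \<open>\<phi>\<^sub>l\<close>
  that treat all digits \<open>\<ge> l\<close> as \<open>\<omega>\<close>, by recursion on \<open>l\<close>; at each level only finitely many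
  truncation patterns occur, so the nodes can be chosen pairwise incomparable, also across
  levels.  Incomparability means that finitely many output entries determine finitely many input
  digits exactly, and conversely; this is invariant under \<open>P\<close>, so \<open>\<psi> = P \<circ> \<phi> \<circ> P\<inverse>\<close> is an
  embedding of the Baire space.
\<close>

section \<open>Truncated agreement and cylinders\<close>

definition trunc :: "nat \<Rightarrow> enat \<Rightarrow> enat" where
  "trunc p e = min e (enat p)"

text \<open>The sets \<open>{y. trunc_agree p p x y}\<close> form a neighbourhood base of \<open>x\<close> in \<open>(\<omega>+1)\<^sup>\<omega>\<close>.\<close>

definition trunc_agree :: "nat \<Rightarrow> nat \<Rightarrow> (nat \<Rightarrow> enat) \<Rightarrow> (nat \<Rightarrow> enat) \<Rightarrow> bool" where
  "trunc_agree p n x y \<longleftrightarrow> (\<forall>i<n. trunc p (x i) = trunc p (y i))"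

lemma trunc_trunc: "p \<le> q \<Longrightarrow> trunc p (trunc q e) = trunc p e"
  by (simp add: trunc_def min.assoc min_absorb2)

lemma trunc_eq_coarsen: "p \<le> q \<Longrightarrow> trunc q a = trunc q b \<Longrightarrow> trunc p a = trunc p b"
  by (metis trunc_trunc)

lemma trunc_eq_below: "trunc p a = trunc p b \<Longrightarrow> b < enat p \<Longrightarrow> a = b"
  by (auto simp: trunc_def min_def split: if_splits)

lemma trunc_eq_above: "trunc p a = trunc p b \<Longrightarrow> enat l \<le> b \<Longrightarrow> l \<le> p \<Longrightarrow> enat l \<le> a"
  unfolding trunc_def by (metis enat_ord_simps(1) min.bounded_iff)

lemma trunc_in_atMost: "trunc p e \<in> enat ` {..p}"
  by (cases e) (auto simp: trunc_def min_def)

lemma trunc_agree_mono: "trunc_agree q n x y \<Longrightarrow> p \<le> q \<Longrightarrow> m \<le> n \<Longrightarrow> trunc_agree p m x y"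
  unfolding trunc_agree_def by (meson less_le_trans trunc_eq_coarsen)

lemma trunc_agree_le: "trunc_agree p n x y \<Longrightarrow> m \<le> n \<Longrightarrow> trunc_agree p m x y"
  by (simp add: trunc_agree_def)

lemma trunc_agree_refl [simp]: "trunc_agree p n x x"
  by (simp add: trunc_agree_def)

lemma trunc_agree_sym: "trunc_agree p n x y \<Longrightarrow> trunc_agree p n y x"
  by (simp add: trunc_agree_def)

lemma trunc_agree_trans: "trunc_agree p n x y \<Longrightarrow> trunc_agree p n y z \<Longrightarrow> trunc_agree p n x z"
  by (simp add: trunc_agree_def)

lemma trunc_agree_head_below:
  assumes "trunc_agree M M w w'" "w 0 < enat l" "l < M"
  shows "w' 0 = w 0"
proof -
  have "w 0 < enat M" using assms(2,3) by (simp add: less_trans)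
  then show ?thesis using assms(1,3) trunc_eq_below[of M "w' 0" "w 0"] by (simp add: trunc_agree_def)
qed

lemma trunc_agree_head_above:
  assumes "trunc_agree M M w w'" "enat l \<le> w 0" "l < M"
  shows "enat l \<le> w' 0"
  using assms trunc_eq_above[of M "w' 0" "w 0" l] by (simp add: trunc_agree_def)

definition seq_tl :: "(nat \<Rightarrow> 'a) \<Rightarrow> nat \<Rightarrow> 'a" where
  "seq_tl w = (\<lambda>n. w (Suc n))"

lemma trunc_agree_tail:
  assumes "trunc_agree M M w w'" "K < M"
  shows "trunc_agree K K (seq_tl w) (seq_tl w')"
proof -
  have "trunc_agree M (Suc K) w w'" using assms by (simp add: trunc_agree_le)
  then have "trunc_agree M K (seq_tl w) (seq_tl w')" by (simp add: trunc_agree_def seq_tl_def)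
  then show ?thesis using assms(2) by (simp add: trunc_agree_mono)
qed

lemma length_restr [simp]: "length (restr x n) = n"
  by (simp add: restr_def)

lemma nth_restr [simp]: "i < n \<Longrightarrow> restr x n ! i = x i"
  by (simp add: restr_def)

lemma take_restr: "n \<le> m \<Longrightarrow> take n (restr x m) = restr x n"
  by (simp add: restr_def take_map)

lemma map_trunc_restr_eq_iff:
  "map (trunc p) (restr x n) = map (trunc p) (restr y n) \<longleftrightarrow> trunc_agree p n x y"
  by (auto simp: restr_def trunc_agree_def)

lemma restr_eq_iff: "restr x (length s) = s \<longleftrightarrow> (\<forall>i<length s. x i = s ! i)"
proof
  assume "restr x (length s) = s"
  then show "\<forall>i<length s. x i = s ! i" by (metis nth_restr)
next
  assume "\<forall>i<length s. x i = s ! i"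
  then show "restr x (length s) = s" by (intro nth_equalityI) auto
qed

lemma cyl_iff: "x \<in> cyl s \<longleftrightarrow> (\<forall>i<length s. x i = s ! i)"
  by (simp add: cyl_def restr_eq_iff)

lemma prefix_nth: "prefix xs ys \<Longrightarrow> i < length xs \<Longrightarrow> xs ! i = ys ! i"
  by (auto simp: prefix_def nth_append)

lemma cyl_antimono: "prefix a b \<Longrightarrow> cyl b \<subseteq> cyl a"
proof
  fix x assume "prefix a b" "x \<in> cyl b"
  then show "x \<in> cyl a"
    using prefix_length_le[of a b] by (auto simp: cyl_iff prefix_nth)
qed

lemma prefix_restr_iff: "prefix s (restr x n) \<longleftrightarrow> length s \<le> n \<and> x \<in> cyl s"
proof
  assume a: "prefix s (restr x n)"
  then have "length s \<le> n" using prefix_length_le by fastforce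
  moreover have "x \<in> cyl s"
    using a calculation by (auto simp: cyl_iff dest: prefix_nth)
  ultimately show "length s \<le> n \<and> x \<in> cyl s" by simp
next
  assume "length s \<le> n \<and> x \<in> cyl s"
  then have "take (length s) (restr x n) = s" by (simp add: take_restr cyl_def)
  then show "prefix s (restr x n)" by (metis take_is_prefix)
qed

lemma cyl_prefix_cases:
  assumes "x \<in> cyl a" "x \<in> cyl b" shows "prefix a b \<or> prefix b a"
proof (cases "length a \<le> length b")
  case True
  then have "a = take (length a) b" using assms take_restr[of "length a" "length b" x] by (simp add: cyl_def)
  then show ?thesis by (metis take_is_prefix)
next
  case False
  then have "b = take (length b) a" using assms take_restr[of "length b" "length a" x] by (simp add: cyl_def)
  then show ?thesis by (metis take_is_prefix)
qed

lemma parallel_cyl_disjoint: "a \<parallel> b \<Longrightarrow> x \<in> cyl a \<Longrightarrow> x \<notin> cyl b"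
  using cyl_prefix_cases by blast

lemma restr_parallel:
  assumes "x \<notin> cyl s" "length s \<le> n"
  shows "restr x n \<parallel> s"
proof
  show "\<not> prefix s (restr x n)" using assms(1) by (simp add: prefix_restr_iff)
  show "\<not> prefix (restr x n) s"
  proof
    assume p: "prefix (restr x n) s"
    then have "length s = n" using assms(2) prefix_length_le by fastforce
    from p obtain zs where zs: "s = restr x n @ zs" by (auto simp: prefix_def)
    then have "zs = []" using \<open>length s = n\<close> by simp
    then have "restr x (length s) = s" using zs \<open>length s = n\<close> by simp
    then show False using assms(1) by (simp add: cyl_def)
  qed
qed

section \<open>Continuity criteria and embeddings\<close>

lemma open_trunc_class: "open {e :: enat. trunc p e = c}"
proof (cases "c < enat p")
  case True
  then obtain k where "c = enat k" "k < p"
    by (cases c) auto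
  then have "{e. trunc p e = c} = {enat k}"
    by (auto simp: trunc_def min_def split: if_splits)
  then show ?thesis by (simp add: open_enat)
next
  case False
  show ?thesis
  proof (cases "c = enat p")
    case c: True
    show ?thesis
    proof (cases p)
      case 0
      then have "{e. trunc p e = c} = UNIV" using c by (auto simp: trunc_def zero_enat_def[symmetric])
      then show ?thesis by simp
    next
      case (Suc q)
      have "{e. trunc p e = c} = {enat q <..}"
      proof (intro set_eqI iffI)
        fix e assume "e \<in> {e. trunc p e = c}"
        then have "enat p \<le> e" using c by (auto simp: trunc_def min_def split: if_splits)
        then show "e \<in> {enat q <..}" using Suc by (simp add: Suc_ile_eq)
      next
        fix e assume "e \<in> {enat q <..}"
        then have "enat p \<le> e" using Suc by (simp add: Suc_ile_eq)
        then show "e \<in> {e. trunc p e = c}" using c by (simp add: trunc_def min_def)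
      qed
      then show ?thesis by simp
    qed
  next
    case False2: False
    then have "{e. trunc p e = c} = {}"
      using False by (auto simp: trunc_def min_def split: if_splits)
    then show ?thesis by simp
  qed
qed

lemma open_trunc_agree: "open {w'. trunc_agree p n w w'}"
proof -
  have "{w'. trunc_agree p n w w'} = {f. \<forall>i\<in>{..<n}. f (id i) \<in> (\<lambda>i. {e. trunc p e = trunc p (w i)}) i}"
    by (auto simp: trunc_agree_def)
  also have "open \<dots>"
    by (rule product_topology_basis') (simp_all add: open_trunc_class)
  finally show ?thesis .
qed

lemma open_enat_contains_trunc_class:
  assumes "open V" "e \<in> V"
  shows "\<exists>l. \<forall>e'. trunc l e' = trunc l e \<longrightarrow> e' \<in> V"
proof (cases e)
  case (enat k)
  then have "trunc (Suc k) e' = trunc (Suc k) e \<Longrightarrow> e' = e" for e'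
    by (simp add: trunc_eq_below)
  then show ?thesis using assms(2) by blast
next
  case infinity
  obtain b where b: "b < \<infinity>" "{b <.. \<infinity>} \<subseteq> V"
    using open_left[OF assms(1), of \<infinity> 0] assms(2) infinity by auto
  then obtain k where k: "b = enat k" by (cases b) auto
  have "e' \<in> V" if "trunc (Suc k) e' = trunc (Suc k) e" for e'
  proof -
    have "enat (Suc k) \<le> e'" using that by (rule trunc_eq_above) (simp_all add: infinity)
    then show ?thesis using b k by (auto simp: Suc_ile_eq)
  qed
  then show ?thesis by blast
qed

lemma closed_cyl: "closed (cyl s)"
proof -
  have "cyl s = (\<Inter>i<length s. {x. x i = s ! i})" by (auto simp: cyl_iff)
  moreover have "closed {x :: nat \<Rightarrow> enat. x i = a}" for i a
    by (rule closed_Collect_eq) simp_all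
  ultimately show ?thesis by auto
qed

lemma open_prefix_class: "open {y :: nat \<Rightarrow> 'a::discrete_topology. \<forall>i<M. y i = x i}"
proof -
  have "{y :: nat \<Rightarrow> 'a. \<forall>i<M. y i = x i} = {f. \<forall>i\<in>{..<M}. f (id i) \<in> (\<lambda>i. {x i}) i}" by auto
  also have "open \<dots>" by (rule product_topology_basis') (simp_all add: open_discrete)
  finally show ?thesis .
qed

lemma cantor_top_eq: "cantor_top = euclidean"
  by (simp add: cantor_top_def euclidean_product_topology)

lemma baire_top_eq: "baire_top = euclidean"
proof -
  have "discrete_topology UNIV = (euclidean :: nat topology)"
    by (simp add: discrete_topology_unique open_discrete)
  then show ?thesis unfolding baire_top_def by (simp add: euclidean_product_topology)
qed

lemma continuous_on_by_trunc_agree: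
  fixes f :: "(nat \<Rightarrow> enat) \<Rightarrow> nat \<Rightarrow> enat"
  assumes "\<And>w l. \<exists>M. \<forall>w'. trunc_agree M M w w' \<longrightarrow> trunc_agree l l (f w) (f w')"
  shows "continuous_on UNIV f"
proof (rule continuous_on_coordinatewise_then_product)
  fix j
  show "continuous_on UNIV (\<lambda>w. f w j)"
    unfolding continuous_on_topological
  proof (intro ballI allI impI)
    fix w B assume B: "open B" "f w j \<in> B"
    obtain l0 where l0: "\<forall>e'. trunc l0 e' = trunc l0 (f w j) \<longrightarrow> e' \<in> B"
      using open_enat_contains_trunc_class[OF B] by blast
    define l where "l = max l0 (Suc j)"
    obtain M where M: "\<forall>w'. trunc_agree M M w w' \<longrightarrow> trunc_agree l l (f w) (f w')"
      using assms[of w l] by blast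
    have "f w' j \<in> B" if "trunc_agree M M w w'" for w'
    proof -
      have "trunc l (f w j) = trunc l (f w' j)"
        using M that by (auto simp: trunc_agree_def l_def)
      then have "trunc l0 (f w' j) = trunc l0 (f w j)"
        by (metis trunc_eq_coarsen max.cobounded1 l_def)
      then show ?thesis using l0 by blast
    qed
    then show "\<exists>A. open A \<and> w \<in> A \<and> (\<forall>y\<in>UNIV. y \<in> A \<longrightarrow> f y j \<in> B)"
      by (intro exI[of _ "{w'. trunc_agree M M w w'}"]) (auto simp: open_trunc_agree)
  qed
qed

lemma continuous_on_by_prefix:
  fixes g :: "(nat \<Rightarrow> 'a::discrete_topology) \<Rightarrow> nat \<Rightarrow> 'b::topological_space"
  assumes "\<And>x j. x \<in> S \<Longrightarrow> \<exists>M. \<forall>y\<in>S. (\<forall>i<M. y i = x i) \<longrightarrow> g y j = g x j"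
  shows "continuous_on S g"
proof (rule continuous_on_coordinatewise_then_product)
  fix j
  show "continuous_on S (\<lambda>x. g x j)"
    unfolding continuous_on_topological
  proof (intro ballI allI impI)
    fix x B assume "x \<in> S" "open B" "g x j \<in> B"
    then obtain M where "\<forall>y\<in>S. (\<forall>i<M. y i = x i) \<longrightarrow> g y j = g x j"
      using assms by blast
    then show "\<exists>A. open A \<and> x \<in> A \<and> (\<forall>y\<in>S. y \<in> A \<longrightarrow> g y j \<in> B)"
      using \<open>g x j \<in> B\<close> by (intro exI[of _ "{y. \<forall>i<M. y i = x i}"]) (auto simp: open_prefix_class)
  qed
qed

lemma Hausdorff_space_euclidean_t2: "Hausdorff_space (euclidean :: 'a::t2_space topology)"
  unfolding Hausdorff_space_def
proof (intro allI impI)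
  fix x y :: 'a
  assume "x \<in> topspace euclidean \<and> y \<in> topspace euclidean \<and> x \<noteq> y"
  then have "x \<noteq> y" by blast
  from hausdorff[OF this] obtain U V where UV: "open U" "open V" "x \<in> U" "y \<in> V" "U \<inter> V = {}"
    by blast
  have "openin euclidean U" by (unfold open_openin[symmetric]) (rule UV(1))
  moreover have "openin euclidean V" by (unfold open_openin[symmetric]) (rule UV(2))
  moreover have "disjnt U V" unfolding disjnt_def by (rule UV(5))
  ultimately show "\<exists>U V. openin euclidean U \<and> openin euclidean V \<and> x \<in> U \<and> y \<in> V \<and> disjnt U V"
    using UV(3,4) by blast
qed

lemma compact_space_cantor_top: "compact_space cantor_top"
proof -
  have "compact_space (euclidean :: enat topology)"
    by (simp add: compact_space_def compact_UNIV)
  then show ?thesis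
    unfolding cantor_top_def by (simp add: compact_space_product_topology)
qed

lemma Hausdorff_space_cantor_top: "Hausdorff_space cantor_top"
  unfolding cantor_top_def
  by (simp add: Hausdorff_space_product_topology Hausdorff_space_euclidean_t2)

lemma embedding_map_cantor_top:
  assumes "continuous_on UNIV f" "inj f" "range f \<subseteq> D"
  shows "embedding_map cantor_top (subtopology cantor_top D) f"
proof -
  have "embedding_map cantor_top cantor_top f"
    using assms compact_space_cantor_top Hausdorff_space_cantor_top
    by (intro continuous_imp_embedding_map) (simp_all add: cantor_top_eq)
  then show ?thesis using assms(3) by (simp add: embedding_map_in_subtopology cantor_top_eq)
qed

lemma inj_if_prefix_determines:
  fixes f :: "(nat \<Rightarrow> 'a) \<Rightarrow> nat \<Rightarrow> 'b"
  assumes "\<And>w n. \<exists>M. \<forall>w'. (\<forall>i<M. f w' i = f w i) \<longrightarrow> (\<forall>i<n. w' i = w i)"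
  shows "inj f"
proof (rule injI)
  fix w w' assume eq: "f w' = f w"
  show "w' = w"
  proof
    fix i
    obtain M where "\<forall>w''. (\<forall>k<M. f w'' k = f w k) \<longrightarrow> (\<forall>k<Suc i. w'' k = w k)"
      using assms[of w "Suc i"] by blast
    then show "w' i = w i" using eq by simp
  qed
qed

lemma embedding_map_by_prefix:
  fixes g :: "(nat \<Rightarrow> 'a::discrete_topology) \<Rightarrow> nat \<Rightarrow> 'b::discrete_topology"
  assumes determined: "\<And>x n. \<exists>M. \<forall>y. (\<forall>i<M. y i = x i) \<longrightarrow> (\<forall>i<n. g y i = g x i)"
    and determines: "\<And>x n. \<exists>M. \<forall>y. (\<forall>i<M. g y i = g x i) \<longrightarrow> (\<forall>i<n. y i = x i)"
  shows "embedding_map euclidean euclidean g"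
proof -
  have inj: "inj g" using determines by (rule inj_if_prefix_determines)
  have "continuous_on UNIV g"
  proof (rule continuous_on_by_prefix)
    fix x j
    obtain M where "\<forall>y. (\<forall>i<M. y i = x i) \<longrightarrow> (\<forall>i<Suc j. g y i = g x i)"
      using determined[of x "Suc j"] by blast
    then show "\<exists>M. \<forall>y\<in>UNIV. (\<forall>i<M. y i = x i) \<longrightarrow> g y j = g x j" by blast
  qed
  moreover have "continuous_on (range g) (inv g)"
  proof (rule continuous_on_by_prefix)
    fix v j assume "v \<in> range g"
    then obtain x where x: "v = g x" by blast
    obtain M where M: "\<forall>y. (\<forall>i<M. g y i = g x i) \<longrightarrow> (\<forall>i<Suc j. y i = x i)"
      using determines[of x "Suc j"] by blast
    have "inv g u j = inv g v j" if u: "u \<in> range g" and uv: "\<forall>i<M. u i = v i" for u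
    proof -
      obtain y where y: "u = g y" using u by blast
      then have "y j = x j" using M uv x by blast
      then show ?thesis using x y inj by simp
    qed
    then show "\<exists>M. \<forall>u\<in>range g. (\<forall>i<M. u i = v i) \<longrightarrow> inv g u j = inv g v j" by blast
  qed
  ultimately have "homeomorphic_maps euclidean (top_of_set (range g)) g (inv g)"
    using inj by (auto simp: homeomorphic_maps_def continuous_map_in_subtopology)
  then show ?thesis
    unfolding embedding_map_def by (auto simp: homeomorphic_map_maps)
qed

definition P_inv :: "(nat \<Rightarrow> nat) \<Rightarrow> nat \<Rightarrow> enat" where
  "P_inv z = (\<lambda>n. if z n = 0 then \<infinity> else enat (z n - 1))"

lemma P_inv_P [simp]: "P_inv (P_map x) = x"
proof
  fix n show "P_inv (P_map x) n = x n"
    by (cases "x n") (simp_all add: P_inv_def P_map_def)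
qed

lemma P_P_inv [simp]: "P_map (P_inv z) = z"
  by (auto simp: P_inv_def P_map_def fun_eq_iff)

lemma P_map_nth_eq_iff: "P_map x i = P_map y i \<longleftrightarrow> x i = y i"
  by (cases "x i"; cases "y i") (auto simp: P_map_def)

lemma P_inv_nth_eq_iff: "P_inv z i = P_inv z' i \<longleftrightarrow> z i = z' i"
  by (metis P_P_inv P_map_nth_eq_iff)

text \<open>The exact (Baire) prefix conditions are invariant under the coordinatewise bijection \<open>P\<close>,
  although \<open>P\<close> itself is not continuous.\<close>

lemma embedding_map_baire_top_conj:
  fixes f :: "(nat \<Rightarrow> enat) \<Rightarrow> nat \<Rightarrow> enat"
  assumes determined: "\<And>w n. \<exists>M. \<forall>w'. (\<forall>i<M. w' i = w i) \<longrightarrow> (\<forall>i<n. f w' i = f w i)"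
    and determines: "\<And>w n. \<exists>M. \<forall>w'. (\<forall>i<M. f w' i = f w i) \<longrightarrow> (\<forall>i<n. w' i = w i)"
    and range: "range f \<subseteq> D"
  shows "embedding_map baire_top (subtopology baire_top (P_map ` D)) (\<lambda>z. P_map (f (P_inv z)))"
proof -
  define g where "g = (\<lambda>z. P_map (f (P_inv z)))"
  have "embedding_map euclidean euclidean g"
  proof (rule embedding_map_by_prefix)
    fix z n
    obtain M where M: "\<forall>w'. (\<forall>i<M. w' i = P_inv z i) \<longrightarrow> (\<forall>i<n. f w' i = f (P_inv z) i)"
      using determined by blast
    have "\<forall>i<n. g y i = g z i" if "\<forall>i<M. y i = z i" for y
    proof -
      have "\<forall>i<M. P_inv y i = P_inv z i" using that by (simp only: P_inv_nth_eq_iff)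
      then show ?thesis unfolding g_def P_map_nth_eq_iff using M by blast
    qed
    then show "\<exists>M. \<forall>y. (\<forall>i<M. y i = z i) \<longrightarrow> (\<forall>i<n. g y i = g z i)" by blast
  next
    fix z n
    obtain M where M: "\<forall>w'. (\<forall>i<M. f w' i = f (P_inv z) i) \<longrightarrow> (\<forall>i<n. w' i = P_inv z i)"
      using determines by blast
    have "\<forall>i<n. y i = z i" if "\<forall>i<M. g y i = g z i" for y
    proof -
      have "\<forall>i<M. f (P_inv y) i = f (P_inv z) i" using that by (simp only: g_def P_map_nth_eq_iff)
      then have "\<forall>i<n. P_inv y i = P_inv z i" using M by blast
      then show ?thesis by (simp only: P_inv_nth_eq_iff)
    qed
    then show "\<exists>M. \<forall>y. (\<forall>i<M. g y i = g z i) \<longrightarrow> (\<forall>i<n. y i = z i)" by blast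
  qed
  moreover have "range g \<subseteq> P_map ` D" using range by (auto simp: g_def)
  ultimately show ?thesis
    by (simp add: embedding_map_in_subtopology baire_top_eq g_def)
qed

section \<open>The construction below a wide tree\<close>

lemma nowhere_dense_in_subset:
  assumes "nowhere_dense_in X A" "B \<subseteq> A"
  shows "nowhere_dense_in X B"
proof -
  have "X interior_of (X closure_of B) \<subseteq> X interior_of (X closure_of A)"
    by (intro interior_of_mono closure_of_mono assms(2))
  then show ?thesis using assms unfolding nowhere_dense_in_def by blast
qed

lemma finite_pairwise_choice:
  assumes "finite P"
    and "\<And>\<beta> S. \<beta> \<in> P \<Longrightarrow> finite S \<Longrightarrow> \<forall>s\<in>S. \<exists>\<beta>'\<in>P. Q \<beta>' s \<Longrightarrow> \<exists>\<nu>. Q \<beta> \<nu> \<and> (\<forall>s\<in>S. R \<nu> s)"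
    and "\<And>x y. R x y \<Longrightarrow> R y x"
  shows "\<exists>F. (\<forall>\<beta>\<in>P. Q \<beta> (F \<beta>)) \<and> pairwise (\<lambda>\<beta> \<beta>'. R (F \<beta>) (F \<beta>')) P"
  using assms(1,2)
proof (induction P rule: finite_induct)
  case empty
  then show ?case by simp
next
  case (insert \<beta> P)
  have "\<exists>\<nu>. Q \<beta>' \<nu> \<and> (\<forall>s\<in>S. R \<nu> s)"
    if "\<beta>' \<in> P" "finite S" "\<forall>s\<in>S. \<exists>\<beta>''\<in>P. Q \<beta>'' s" for \<beta>' S
    using insert.prems[of \<beta>' S] that by blast
  then obtain F where F: "\<forall>\<beta>\<in>P. Q \<beta> (F \<beta>)" "pairwise (\<lambda>\<beta> \<beta>'. R (F \<beta>) (F \<beta>')) P"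
    using insert.IH by blast
  have "\<forall>s\<in>F ` P. \<exists>\<beta>'\<in>insert \<beta> P. Q \<beta>' s" using F(1) by blast
  then obtain \<nu> where \<nu>: "Q \<beta> \<nu>" "\<forall>s\<in>F ` P. R \<nu> s"
    using insert.prems[of \<beta> "F ` P"] insert.hyps(1) by blast
  define F' where "F' = F(\<beta> := \<nu>)"
  have "\<forall>\<beta>'\<in>insert \<beta> P. Q \<beta>' (F' \<beta>')"
    using F(1) \<nu>(1) insert.hyps(2) by (auto simp: F'_def)
  moreover have "pairwise (\<lambda>\<beta> \<beta>'. R (F' \<beta>) (F' \<beta>')) (insert \<beta> P)"
    unfolding pairwise_insert
  proof
    show "\<forall>\<beta>'. \<beta>' \<in> P \<and> \<beta>' \<noteq> \<beta> \<longrightarrow> R (F' \<beta>) (F' \<beta>') \<and> R (F' \<beta>') (F' \<beta>)"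
      using \<nu>(2) insert.hyps(2) assms(3) unfolding F'_def by auto
    show "pairwise (\<lambda>\<beta> \<beta>'. R (F' \<beta>) (F' \<beta>')) P"
      using F(2) insert.hyps(2) unfolding pairwise_def F'_def by auto
  qed
  ultimately show ?case by blast
qed

lemma the_enat_less: "e < enat l \<Longrightarrow> the_enat e < l"
  by (cases e) auto

lemma enat_the_enat_less: "e < L \<Longrightarrow> enat (the_enat e) = e" for L :: enat
  by (cases e) auto

text \<open>A chooser \<open>A\<close> assigns to a level \<open>c\<close>, a node \<open>\<sigma>\<close> and a truncation pattern \<open>\<beta>\<close> the node
  \<open>A c \<sigma> \<beta>\<close> below \<open>\<sigma>\<close> that is visited when the next digit is \<open>c\<close> and the tail produces \<open>\<beta>\<close>.\<close>

type_synonym chooser = "nat \<Rightarrow> enat list \<Rightarrow> enat list \<Rightarrow> enat list"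

locale wide_tree_embedding =
  fixes T :: "enat list set"
  assumes wide: "wide_tree T"
begin

lemma Nil_in_T: "[] \<in> T"
  using wide by (simp add: wide_tree_def)

lemma T_prefix_closed: "\<tau> \<in> T \<Longrightarrow> prefix \<sigma> \<tau> \<Longrightarrow> \<sigma> \<in> T"
  using wide by (auto simp: wide_tree_def is_tree_def)

lemma restr_in_T: "x \<in> lim_tree T \<Longrightarrow> restr x n \<in> T"
  by (simp add: lim_tree_def)

definition thin :: "enat list \<Rightarrow> enat list" where
  "thin \<sigma> = (SOME \<tau>. \<tau> \<in> T \<and> prefix \<sigma> \<tau> \<and> length \<sigma> < length \<tau> \<and>
      nowhere_dense_in (subtopology cantor_top (lim_tree T \<inter> cyl \<sigma>)) (lim_tree T \<inter> cyl \<tau>))"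

lemma thin_exists:
  assumes "\<sigma> \<in> T"
  shows "\<exists>\<tau>. \<tau> \<in> T \<and> prefix \<sigma> \<tau> \<and> length \<sigma> < length \<tau> \<and>
      nowhere_dense_in (subtopology cantor_top (lim_tree T \<inter> cyl \<sigma>)) (lim_tree T \<inter> cyl \<tau>)"
proof -
  obtain \<tau> where \<tau>: "\<tau> \<in> T" "prefix \<sigma> \<tau>"
    "nowhere_dense_in (subtopology cantor_top (lim_tree T \<inter> cyl \<sigma>)) (lim_tree T \<inter> cyl \<tau>)"
    using wide assms unfolding wide_tree_def by blast
  obtain a where a: "\<tau> @ [a] \<in> T" using wide \<tau>(1) unfolding wide_tree_def by blast
  have p: "prefix \<tau> (\<tau> @ [a])" by simp
  have "prefix \<sigma> (\<tau> @ [a])" using \<tau>(2) p by (rule prefix_order.order_trans)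
  moreover have "length \<sigma> < length (\<tau> @ [a])" using prefix_length_le[OF \<tau>(2)] by simp
  moreover have "nowhere_dense_in (subtopology cantor_top (lim_tree T \<inter> cyl \<sigma>)) (lim_tree T \<inter> cyl (\<tau> @ [a]))"
    by (rule nowhere_dense_in_subset[OF \<tau>(3)]) (use cyl_antimono[OF p] in blast)
  ultimately show ?thesis using a by blast
qed

lemma thin:
  assumes "\<sigma> \<in> T"
  shows "thin \<sigma> \<in> T" "prefix \<sigma> (thin \<sigma>)" "length \<sigma> < length (thin \<sigma>)"
    "nowhere_dense_in (subtopology cantor_top (lim_tree T \<inter> cyl \<sigma>)) (lim_tree T \<inter> cyl (thin \<sigma>))"
  using someI_ex[OF thin_exists[OF assms]] unfolding thin_def[symmetric] by blast+

text \<open>This is where the nowhere density of the cone of \<open>thin \<sigma>\<close> is used.\<close>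

lemma open_meets_cone_off_thin:
  assumes "\<sigma> \<in> T" "y \<in> lim_tree T \<inter> cyl (thin \<sigma>)" "open U" "y \<in> U"
  shows "\<exists>x \<in> lim_tree T \<inter> cyl \<sigma> \<inter> U. x \<notin> cyl (thin \<sigma>)"
proof (rule ccontr)
  define Y where "Y = lim_tree T \<inter> cyl \<sigma>"
  define Z where "Z = lim_tree T \<inter> cyl (thin \<sigma>)"
  assume "\<not> ?thesis"
  then have UY: "U \<inter> Y \<subseteq> Z" by (auto simp: Y_def Z_def)
  have ZY: "Z \<subseteq> Y" using cyl_antimono[OF thin(2)[OF assms(1)]] by (auto simp: Y_def Z_def)
  have "openin euclidean U" using assms(3) by (simp add: open_openin[symmetric])
  then have op: "openin (subtopology cantor_top Y) (U \<inter> Y)"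
    unfolding openin_subtopology cantor_top_eq by blast
  have "Z \<subseteq> subtopology cantor_top Y closure_of Z"
    by (rule closure_of_subset) (simp add: ZY cantor_top_eq)
  then have "U \<inter> Y \<subseteq> subtopology cantor_top Y closure_of Z" using UY by blast
  then have "U \<inter> Y \<subseteq> subtopology cantor_top Y interior_of (subtopology cantor_top Y closure_of Z)"
    using op by (rule interior_of_maximal)
  moreover have "y \<in> U \<inter> Y" using assms ZY by (auto simp: Z_def)
  ultimately show False using thin(4)[OF assms(1)] by (auto simp: nowhere_dense_in_def Y_def Z_def)
qed

lemma exists_parallel_node_near:
  assumes "\<sigma> \<in> T" "y \<in> lim_tree T \<inter> cyl (thin \<sigma>)" "finite S" "\<forall>s\<in>S. y \<notin> cyl s"
  shows "\<exists>\<nu>\<in>T. prefix \<sigma> \<nu> \<and> \<nu> \<parallel> thin \<sigma> \<and> (\<forall>s\<in>S. \<nu> \<parallel> s) \<and> n \<le> length \<nu> \<and>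
           map (trunc p) (take n \<nu>) = map (trunc p) (restr y n)"
proof -
  define U where "U = {x. trunc_agree p n y x} - (\<Union>s\<in>S. cyl s)"
  have "open U" unfolding U_def using assms(3) by (simp add: open_Diff open_trunc_agree closed_UN closed_cyl)
  moreover have "y \<in> U" using assms(4) by (simp add: U_def)
  ultimately obtain x where x: "x \<in> lim_tree T" "x \<in> cyl \<sigma>" "x \<in> U" "x \<notin> cyl (thin \<sigma>)"
    using open_meets_cone_off_thin[OF assms(1,2)] by blast
  define N where "N = max n (max (length (thin \<sigma>)) (Max (insert 0 (length ` S))))"
  have N_S: "length s \<le> N" if "s \<in> S" for s
  proof -
    have "length s \<le> Max (insert 0 (length ` S))" using assms(3) that by (intro Max_ge) simp_all
    then show ?thesis unfolding N_def by linarith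
  qed
  have N: "n \<le> N" "length (thin \<sigma>) \<le> N" "\<And>s. s \<in> S \<Longrightarrow> length s \<le> N"
    using N_S by (auto simp: N_def)
  define \<nu> where "\<nu> = restr x N"
  have "\<nu> \<in> T" using x(1) by (simp add: \<nu>_def restr_in_T)
  moreover have "prefix \<sigma> \<nu>"
    using x(2) N(2) thin(3)[OF assms(1)] by (simp add: \<nu>_def prefix_restr_iff)
  moreover have "\<nu> \<parallel> thin \<sigma>" using x(4) N by (simp add: \<nu>_def restr_parallel)
  moreover have "\<nu> \<parallel> s" if s: "s \<in> S" for s
  proof -
    have "x \<notin> cyl s" using x(3) s by (simp add: U_def)
    then show ?thesis using N(3)[OF s] by (simp add: \<nu>_def restr_parallel)
  qed
  moreover have "map (trunc p) (take n \<nu>) = map (trunc p) (restr y n)"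
    using x(3) N(1) by (auto simp: \<nu>_def take_restr U_def map_trunc_restr_eq_iff intro: trunc_agree_sym)
  ultimately show ?thesis using N(1) by (auto simp: \<nu>_def)
qed

text \<open>The level-\<open>l\<close> construction, which treats every digit \<open>\<ge> l\<close> like \<open>\<omega>\<close>: \<open>node_fin A l k \<sigma> w\<close> is the
  node reached from \<open>\<sigma>\<close> after reading \<open>k\<close> digits of \<open>w\<close>.  A digit \<open>c < l\<close> leads to the node chosen
  for the level-\<open>c\<close> truncation pattern of the point that the level-\<open>c\<close> construction assigns to the tail
  below \<open>thin \<sigma>\<close>; this nested call is what forces the recursion on \<open>l\<close>.\<close>

function node_fin :: "chooser \<Rightarrow> nat \<Rightarrow> nat \<Rightarrow> enat list \<Rightarrow> (nat \<Rightarrow> enat) \<Rightarrow> enat list" where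
  "node_fin A l 0 \<sigma> w = \<sigma>"
| "node_fin A l (Suc k) \<sigma> w =
     (if w 0 < enat l
      then node_fin A l k (A (the_enat (w 0)) \<sigma>
              (map (trunc (the_enat (w 0))) (take (length (thin \<sigma>) + the_enat (w 0))
                 (node_fin A (the_enat (w 0)) (the_enat (w 0)) (thin \<sigma>) (seq_tl w))))) (seq_tl w)
      else node_fin A l k (thin \<sigma>) (seq_tl w))"
  by pat_completeness auto
termination
  by (relation "measures [\<lambda>(A, l, k, \<sigma>, w). l, \<lambda>(A, l, k, \<sigma>, w). k]") (auto dest: the_enat_less)

definition pattern :: "chooser \<Rightarrow> nat \<Rightarrow> enat list \<Rightarrow> (nat \<Rightarrow> enat) \<Rightarrow> enat list" where
  "pattern A c \<sigma> w = map (trunc c) (take (length (thin \<sigma>) + c) (node_fin A c c (thin \<sigma>) w))"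

definition step :: "chooser \<Rightarrow> enat \<Rightarrow> enat list \<Rightarrow> (nat \<Rightarrow> enat) \<Rightarrow> enat list" where
  "step A L \<sigma> w = (if w 0 < L then A (the_enat (w 0)) \<sigma> (pattern A (the_enat (w 0)) \<sigma> (seq_tl w))
     else thin \<sigma>)"

lemma node_fin_Suc: "node_fin A l (Suc k) \<sigma> w = node_fin A l k (step A (enat l) \<sigma> w) (seq_tl w)"
  by (simp add: step_def pattern_def)

declare node_fin.simps(2) [simp del]

primrec node_inf :: "chooser \<Rightarrow> nat \<Rightarrow> enat list \<Rightarrow> (nat \<Rightarrow> enat) \<Rightarrow> enat list" where
  "node_inf A 0 \<sigma> w = \<sigma>"
| "node_inf A (Suc k) \<sigma> w = node_inf A k (step A \<infinity> \<sigma> w) (seq_tl w)"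

definition node :: "chooser \<Rightarrow> enat \<Rightarrow> nat \<Rightarrow> enat list \<Rightarrow> (nat \<Rightarrow> enat) \<Rightarrow> enat list" where
  "node A L k \<sigma> w = (case L of enat l \<Rightarrow> node_fin A l k \<sigma> w | \<infinity> \<Rightarrow> node_inf A k \<sigma> w)"

lemma node_0 [simp]: "node A L 0 \<sigma> w = \<sigma>"
  by (cases L) (simp_all add: node_def)

lemma node_Suc: "node A L (Suc k) \<sigma> w = node A L k (step A L \<sigma> w) (seq_tl w)"
  by (cases L) (simp_all add: node_def node_fin_Suc)

lemma node_fin_eq_node: "node_fin A l k \<sigma> w = node A (enat l) k \<sigma> w"
  by (simp add: node_def)

lemma node_fin_cong: "\<forall>c<l. A c = A' c \<Longrightarrow> node_fin A l k \<sigma> w = node_fin A' l k \<sigma> w"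
proof (induction A l k \<sigma> w rule: node_fin.induct)
  case (1 A l \<sigma> w)
  then show ?case by simp
next
  case (2 A l k \<sigma> w)
  show ?case
  proof (cases "w 0 < enat l")
    case True
    define c where "c = the_enat (w 0)"
    have "c < l" using True by (simp add: c_def the_enat_less)
    then have "node_fin A c c (thin \<sigma>) (seq_tl w) = node_fin A' c c (thin \<sigma>) (seq_tl w)"
      using "2.IH"(1) "2.prems" True unfolding c_def by simp
    moreover have "node_fin A l k (A c \<sigma> (map (trunc c) (take (length (thin \<sigma>) + c)
        (node_fin A c c (thin \<sigma>) (seq_tl w))))) (seq_tl w) =
      node_fin A' l k (A c \<sigma> (map (trunc c) (take (length (thin \<sigma>) + c)
        (node_fin A c c (thin \<sigma>) (seq_tl w))))) (seq_tl w)"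
      using "2.IH"(2) "2.prems" True unfolding c_def by blast
    ultimately show ?thesis using True "2.prems" \<open>c < l\<close>
      by (simp del: node_fin.simps add: node_fin.simps(2)[of _ l k] c_def[symmetric])
  next
    case False
    then show ?thesis using "2.IH"(3) "2.prems" by (simp add: node_fin.simps(2))
  qed
qed

definition patterns :: "chooser \<Rightarrow> nat \<Rightarrow> enat list \<Rightarrow> enat list set" where
  "patterns A c \<sigma> = range (pattern A c \<sigma>)"

lemma pattern_in_patterns [simp]: "pattern A c \<sigma> w \<in> patterns A c \<sigma>"
  by (simp add: patterns_def)

lemma finite_patterns: "finite (patterns A c \<sigma>)"
proof (rule finite_subset)
  show "patterns A c \<sigma> \<subseteq> {xs. set xs \<subseteq> enat ` {..c} \<and> length xs \<le> length (thin \<sigma>) + c}"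
    by (auto simp: patterns_def pattern_def trunc_in_atMost)
  show "finite {xs. set xs \<subseteq> enat ` {..c} \<and> length xs \<le> length (thin \<sigma>) + c}"
    by (intro finite_lists_length_le finite_imageI finite_atMost)
qed

lemma patterns_cong: "\<forall>c'<c. A c' = A' c' \<Longrightarrow> patterns A c \<sigma> = patterns A' c \<sigma>"
  unfolding patterns_def pattern_def using node_fin_cong by (metis image_cong)

definition realises_pattern :: "nat \<Rightarrow> enat list \<Rightarrow> enat list \<Rightarrow> enat list \<Rightarrow> bool" where
  "realises_pattern b \<sigma> \<beta> \<nu> \<longleftrightarrow> \<nu> \<in> T \<and> prefix \<sigma> \<nu> \<and> \<nu> \<parallel> thin \<sigma> \<and>
     length (thin \<sigma>) + b \<le> length \<nu> \<and> map (trunc b) (take (length (thin \<sigma>) + b) \<nu>) = \<beta>"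

definition admissible :: "chooser \<Rightarrow> nat \<Rightarrow> enat list \<Rightarrow> (enat list \<Rightarrow> enat list) \<Rightarrow> bool" where
  "admissible A b \<sigma> F \<longleftrightarrow>
     (\<forall>\<beta>\<in>patterns A b \<sigma>. realises_pattern b \<sigma> \<beta> (F \<beta>) \<and> (\<forall>c<b. \<forall>\<gamma>\<in>patterns A c \<sigma>. F \<beta> \<parallel> A c \<sigma> \<gamma>)) \<and>
     pairwise (\<lambda>\<beta> \<beta>'. F \<beta> \<parallel> F \<beta>') (patterns A b \<sigma>)"

lemma admissibleD:
  assumes "admissible A b \<sigma> F" "\<beta> \<in> patterns A b \<sigma>"
  shows "F \<beta> \<in> T" "prefix \<sigma> (F \<beta>)" "F \<beta> \<parallel> thin \<sigma>"
    "length (thin \<sigma>) + b \<le> length (F \<beta>)" "map (trunc b) (take (length (thin \<sigma>) + b) (F \<beta>)) = \<beta>"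
    "\<And>c \<gamma>. c < b \<Longrightarrow> \<gamma> \<in> patterns A c \<sigma> \<Longrightarrow> F \<beta> \<parallel> A c \<sigma> \<gamma>"
    "\<And>\<beta>'. \<beta>' \<in> patterns A b \<sigma> \<Longrightarrow> \<beta>' \<noteq> \<beta> \<Longrightarrow> F \<beta> \<parallel> F \<beta>'"
  using assms unfolding admissible_def realises_pattern_def pairwise_def by blast+

lemma admissible_cong: "\<forall>c<b. A c = A' c \<Longrightarrow> admissible A b \<sigma> F = admissible A' b \<sigma> F"
proof -
  assume "\<forall>c<b. A c = A' c"
  moreover from this have "\<forall>c\<le>b. patterns A c \<sigma> = patterns A' c \<sigma>"
    by (auto intro!: patterns_cong)
  ultimately show ?thesis unfolding admissible_def by simp
qed

text \<open>The chooser is defined by well-founded recursion on the level: the admissibility condition at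
  level \<open>b\<close> only involves the chooser below \<open>b\<close>.\<close>

primrec choice_upto :: "nat \<Rightarrow> chooser" where
  "choice_upto 0 = (\<lambda>_ _ _. [])"
| "choice_upto (Suc b) = (choice_upto b)(b := (\<lambda>\<sigma>. SOME F. admissible (choice_upto b) b \<sigma> F))"

definition choice :: chooser where
  "choice c = choice_upto (Suc c) c"

lemma choice_upto_eq: "c < m \<Longrightarrow> choice_upto m c = choice c"
proof (induction m)
  case 0
  then show ?case by simp
next
  case (Suc m)
  then show ?case by (cases "c = m") (simp_all add: choice_def)
qed

lemma choice_eq_some: "choice b \<sigma> = (SOME F. admissible choice b \<sigma> F)"
proof -
  have "choice b \<sigma> = (SOME F. admissible (choice_upto b) b \<sigma> F)" by (simp add: choice_def)
  also have "(\<lambda>F. admissible (choice_upto b) b \<sigma> F) = (\<lambda>F. admissible choice b \<sigma> F)"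
    using choice_upto_eq by (intro ext admissible_cong) simp
  finally show ?thesis by simp
qed

definition admissible_level :: "nat \<Rightarrow> bool" where
  "admissible_level b \<longleftrightarrow> (\<forall>\<sigma>\<in>T. admissible choice b \<sigma> (choice b \<sigma>))"

abbreviation admissible_below :: "enat \<Rightarrow> bool" where
  "admissible_below L \<equiv> \<forall>c. enat c < L \<longrightarrow> admissible_level c"

lemma step_in_T:
  assumes "admissible_below L" "\<sigma> \<in> T"
  shows "step choice L \<sigma> w \<in> T" "prefix \<sigma> (step choice L \<sigma> w)" "length \<sigma> < length (step choice L \<sigma> w)"
proof -
  have "step choice L \<sigma> w \<in> T \<and> prefix \<sigma> (step choice L \<sigma> w) \<and> length \<sigma> < length (step choice L \<sigma> w)"
  proof (cases "w 0 < L")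
    case True
    define c where "c = the_enat (w 0)"
    have "admissible choice c \<sigma> (choice c \<sigma>)"
      using assms True enat_the_enat_less[OF True] by (simp add: admissible_level_def c_def)
    from admissibleD(1,2,4)[OF this pattern_in_patterns, of "seq_tl w"] show ?thesis
      using thin(3)[OF assms(2)] True by (simp add: step_def c_def[symmetric])
  next
    case False
    then show ?thesis using thin[OF assms(2)] by (simp add: step_def)
  qed
  then show "step choice L \<sigma> w \<in> T" "prefix \<sigma> (step choice L \<sigma> w)"
    "length \<sigma> < length (step choice L \<sigma> w)" by simp_all
qed

lemma node_in_T:
  assumes "admissible_below L" "\<sigma> \<in> T"
  shows "node choice L k \<sigma> w \<in> T \<and> prefix \<sigma> (node choice L k \<sigma> w) \<and>
    length \<sigma> + k \<le> length (node choice L k \<sigma> w)"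
  using assms(2)
proof (induction k arbitrary: \<sigma> w)
  case 0
  then show ?case by simp
next
  case (Suc k)
  define \<sigma>' where "\<sigma>' = step choice L \<sigma> w"
  have \<sigma>': "\<sigma>' \<in> T" "prefix \<sigma> \<sigma>'" "length \<sigma> < length \<sigma>'"
    using step_in_T[OF assms(1) Suc.prems] by (simp_all add: \<sigma>'_def)
  then show ?case
    using Suc.IH[OF \<sigma>'(1), of "seq_tl w"]
    by (auto simp: node_Suc \<sigma>'_def[symmetric] intro: prefix_order.trans)
qed

lemma node_prefix_Suc:
  assumes "admissible_below L" "\<sigma> \<in> T"
  shows "prefix (node choice L k \<sigma> w) (node choice L (Suc k) \<sigma> w)"
  using assms(2)
proof (induction k arbitrary: \<sigma> w)
  case 0
  then show ?case using step_in_T(2)[OF assms(1) 0] by (simp add: node_Suc)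
next
  case (Suc k)
  then show ?case
    using step_in_T(1)[OF assms(1) Suc.prems] by (simp add: node_Suc[of _ _ "Suc k"] node_Suc[of _ _ k])
qed

lemma node_prefix_mono:
  assumes "admissible_below L" "\<sigma> \<in> T" "k \<le> k'"
  shows "prefix (node choice L k \<sigma> w) (node choice L k' \<sigma> w)"
  using assms(3)
proof (induction k' rule: dec_induct)
  case base
  then show ?case by simp
next
  case (step k')
  then show ?case using node_prefix_Suc[OF assms(1,2), of k' w] by (auto intro: prefix_order.trans)
qed

text \<open>The nodes visited along \<open>w\<close> increase, and \<open>Phi L \<sigma> w\<close> is their union.\<close>

definition Phi :: "enat \<Rightarrow> enat list \<Rightarrow> (nat \<Rightarrow> enat) \<Rightarrow> nat \<Rightarrow> enat" where
  "Phi L \<sigma> w n = node choice L (Suc n) \<sigma> w ! n"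

lemma restr_Phi_node:
  assumes "admissible_below L" "\<sigma> \<in> T"
  shows "restr (Phi L \<sigma> w) (length (node choice L k \<sigma> w)) = node choice L k \<sigma> w"
  unfolding restr_eq_iff
proof (intro allI impI)
  fix i assume i: "i < length (node choice L k \<sigma> w)"
  have "i < length (node choice L (Suc i) \<sigma> w)"
    using node_in_T[OF assms, of "Suc i" w] by simp
  then show "Phi L \<sigma> w i = node choice L k \<sigma> w ! i"
    using i node_prefix_mono[OF assms, of "Suc i" k w] node_prefix_mono[OF assms, of k "Suc i" w]
    by (cases "Suc i \<le> k") (simp_all add: Phi_def prefix_nth)
qed

lemma Phi_in_lim:
  assumes "admissible_below L" "\<sigma> \<in> T"
  shows "Phi L \<sigma> w \<in> lim_tree T \<inter> cyl \<sigma>"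
proof -
  have "restr (Phi L \<sigma> w) n \<in> T" for n
  proof -
    have np: "node choice L n \<sigma> w \<in> T" "n \<le> length (node choice L n \<sigma> w)"
      using node_in_T[OF assms, of n w] by auto
    have "restr (Phi L \<sigma> w) n = take n (restr (Phi L \<sigma> w) (length (node choice L n \<sigma> w)))"
      using np(2) by (simp add: take_restr)
    also have "\<dots> = take n (node choice L n \<sigma> w)" by (simp add: restr_Phi_node[OF assms])
    finally show ?thesis using np(1) by (metis take_is_prefix T_prefix_closed)
  qed
  moreover have "Phi L \<sigma> w \<in> cyl \<sigma>"
    using restr_Phi_node[OF assms, of w 0] by (simp add: cyl_def)
  ultimately show ?thesis by (simp add: lim_tree_def)
qed

lemma Phi_step:
  assumes "admissible_below L" "\<sigma> \<in> T"
  shows "Phi L \<sigma> w = Phi L (step choice L \<sigma> w) (seq_tl w)"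
proof
  fix n
  define \<sigma>' where "\<sigma>' = step choice L \<sigma> w"
  have \<sigma>': "\<sigma>' \<in> T" "length \<sigma> < length \<sigma>'" using step_in_T[OF assms] by (simp_all add: \<sigma>'_def)
  then have "n < length (node choice L n \<sigma>' (seq_tl w))"
    using node_in_T[OF assms(1) \<sigma>'(1), of n "seq_tl w"] by auto
  then have "node choice L n \<sigma>' (seq_tl w) ! n = node choice L (Suc n) \<sigma>' (seq_tl w) ! n"
    using node_prefix_Suc[OF assms(1) \<sigma>'(1), of n "seq_tl w"] by (simp add: prefix_nth)
  then show "Phi L \<sigma> w n = Phi L (step choice L \<sigma> w) (seq_tl w) n"
    by (simp add: Phi_def node_Suc \<sigma>'_def)
qed

lemma pattern_eq_Phi:
  assumes "admissible_below (enat c)" "\<sigma> \<in> T"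
  shows "pattern choice c \<sigma> w = map (trunc c) (restr (Phi (enat c) (thin \<sigma>) w) (length (thin \<sigma>) + c))"
proof -
  have "length (thin \<sigma>) + c \<le> length (node choice (enat c) c (thin \<sigma>) w)"
    using node_in_T[OF assms(1) thin(1)[OF assms(2)], of c w] by simp
  then have "restr (Phi (enat c) (thin \<sigma>) w) (length (thin \<sigma>) + c) =
      take (length (thin \<sigma>) + c) (node choice (enat c) c (thin \<sigma>) w)"
    using restr_Phi_node[OF assms(1) thin(1)[OF assms(2)], of w c] by (metis take_restr)
  then show ?thesis by (simp add: pattern_def node_fin_eq_node)
qed

lemma exists_pattern_node:
  assumes below: "admissible_below (enat b)" and \<sigma>: "\<sigma> \<in> T" and \<beta>: "\<beta> \<in> patterns choice b \<sigma>"
    and S: "finite S" "\<forall>s\<in>S. s \<parallel> thin \<sigma>"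
  shows "\<exists>\<nu>. realises_pattern b \<sigma> \<beta> \<nu> \<and> (\<forall>s\<in>S. \<nu> \<parallel> s)"
proof -
  define n where "n = length (thin \<sigma>) + b"
  obtain w where "\<beta> = pattern choice b \<sigma> w" using \<beta> by (auto simp: patterns_def)
  define y where "y = Phi (enat b) (thin \<sigma>) w"
  have y: "y \<in> lim_tree T \<inter> cyl (thin \<sigma>)" "map (trunc b) (restr y n) = \<beta>"
    using Phi_in_lim[OF below thin(1)[OF \<sigma>]] pattern_eq_Phi[OF below \<sigma>] \<open>\<beta> = _\<close>
    by (simp_all add: y_def n_def)
  have "\<forall>s\<in>S. y \<notin> cyl s"
    using S(2) y(1) parallel_cyl_disjoint[of "thin \<sigma>"] by (auto simp: parallel_commute)
  then obtain \<nu> where "\<nu> \<in> T" "prefix \<sigma> \<nu>" "\<nu> \<parallel> thin \<sigma>" "\<forall>s\<in>S. \<nu> \<parallel> s" "n \<le> length \<nu>"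
    "map (trunc b) (take n \<nu>) = map (trunc b) (restr y n)"
    using exists_parallel_node_near[OF \<sigma> y(1) S(1)] by blast
  then show ?thesis using y(2) by (auto simp: realises_pattern_def n_def)
qed

lemma exists_admissible:
  assumes below: "admissible_below (enat b)" and \<sigma>: "\<sigma> \<in> T"
  shows "\<exists>F. admissible choice b \<sigma> F"
proof -
  define S where "S = (\<Union>c<b. choice c \<sigma> ` patterns choice c \<sigma>)"
  have "finite S" by (simp add: S_def finite_patterns)
  moreover have "\<forall>s\<in>S. s \<parallel> thin \<sigma>"
  proof
    fix s assume "s \<in> S"
    then obtain c \<gamma> where c: "c < b" "\<gamma> \<in> patterns choice c \<sigma>" "s = choice c \<sigma> \<gamma>"
      by (auto simp: S_def)
    then have "admissible choice c \<sigma> (choice c \<sigma>)"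
      using below \<sigma> by (simp add: admissible_level_def)
    then show "s \<parallel> thin \<sigma>" using admissibleD(3) c by blast
  qed
  ultimately have S: "finite S" "\<forall>s\<in>S. s \<parallel> thin \<sigma>" by blast+
  have "\<exists>F. (\<forall>\<beta>\<in>patterns choice b \<sigma>. realises_pattern b \<sigma> \<beta> (F \<beta>) \<and> (\<forall>s\<in>S. F \<beta> \<parallel> s)) \<and>
      pairwise (\<lambda>\<beta> \<beta>'. F \<beta> \<parallel> F \<beta>') (patterns choice b \<sigma>)"
  proof (rule finite_pairwise_choice[OF finite_patterns])
    fix \<beta> S' assume \<beta>: "\<beta> \<in> patterns choice b \<sigma>" and S': "finite S'"
      "\<forall>s\<in>S'. \<exists>\<beta>'\<in>patterns choice b \<sigma>. realises_pattern b \<sigma> \<beta>' s \<and> (\<forall>s'\<in>S. s \<parallel> s')"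
    have "\<forall>s\<in>S \<union> S'. s \<parallel> thin \<sigma>" using S(2) S'(2) by (auto simp: realises_pattern_def)
    then show "\<exists>\<nu>. (realises_pattern b \<sigma> \<beta> \<nu> \<and> (\<forall>s\<in>S. \<nu> \<parallel> s)) \<and> (\<forall>s\<in>S'. \<nu> \<parallel> s)"
      using exists_pattern_node[OF below \<sigma> \<beta>, of "S \<union> S'"] S(1) S'(1) by auto
  qed (simp add: parallel_commute)
  then obtain F where F: "\<forall>\<beta>\<in>patterns choice b \<sigma>. realises_pattern b \<sigma> \<beta> (F \<beta>) \<and> (\<forall>s\<in>S. F \<beta> \<parallel> s)"
    "pairwise (\<lambda>\<beta> \<beta>'. F \<beta> \<parallel> F \<beta>') (patterns choice b \<sigma>)"
    by blast
  have "\<forall>\<beta>\<in>patterns choice b \<sigma>. realises_pattern b \<sigma> \<beta> (F \<beta>) \<and>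
      (\<forall>c<b. \<forall>\<gamma>\<in>patterns choice c \<sigma>. F \<beta> \<parallel> choice c \<sigma> \<gamma>)"
    using F(1) by (auto simp: S_def)
  then have "admissible choice b \<sigma> F" using F(2) by (simp add: admissible_def)
  then show ?thesis by blast
qed

lemma admissible_level_all: "admissible_level b"
proof (induction b rule: less_induct)
  case (less b)
  then have below: "admissible_below (enat b)" by simp
  show ?case unfolding admissible_level_def
  proof
    fix \<sigma> assume "\<sigma> \<in> T"
    then obtain F where "admissible choice b \<sigma> F" using exists_admissible[OF below] by blast
    then show "admissible choice b \<sigma> (choice b \<sigma>)"
      unfolding choice_eq_some[of b \<sigma>] by (rule someI[of "admissible choice b \<sigma>"])
  qed
qed

lemma admissible_below_all: "admissible_below L"
  using admissible_level_all by simp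

lemma admissible_choice: "\<sigma> \<in> T \<Longrightarrow> admissible choice c \<sigma> (choice c \<sigma>)"
  using admissible_level_all by (simp add: admissible_level_def)

lemma restr_Phi: "\<sigma> \<in> T \<Longrightarrow> restr (Phi L \<sigma> w) (length \<sigma>) = \<sigma>"
  using restr_Phi_node[OF admissible_below_all, of \<sigma> L w 0] by simp

lemma Phi_nth_node:
  assumes "\<sigma> \<in> T" "i < length \<sigma>"
  shows "Phi L \<sigma> w i = \<sigma> ! i"
proof -
  have "Phi L \<sigma> w i = restr (Phi L \<sigma> w) (length \<sigma>) ! i" using assms(2) by simp
  then show ?thesis using restr_Phi[OF assms(1)] by simp
qed

lemma Phi_approximates:
  assumes "\<sigma> \<in> T" "w 0 = enat c" "enat c < L"
  shows "trunc_agree c (length (thin \<sigma>) + c) (Phi L \<sigma> w) (Phi (enat c) (thin \<sigma>) (seq_tl w))"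
proof -
  define n where "n = length (thin \<sigma>) + c"
  define \<nu> where "\<nu> = step choice L \<sigma> w"
  have "\<nu> = choice c \<sigma> (pattern choice c \<sigma> (seq_tl w))"
    using assms(2,3) by (simp add: \<nu>_def step_def)
  then have \<nu>: "\<nu> \<in> T" "n \<le> length \<nu>" "map (trunc c) (take n \<nu>) = pattern choice c \<sigma> (seq_tl w)"
    using admissibleD(1,4,5)[OF admissible_choice[OF assms(1)] pattern_in_patterns[of choice c \<sigma> "seq_tl w"]]
    by (simp_all add: n_def)
  have "Phi L \<sigma> w = Phi L \<nu> (seq_tl w)"
    using Phi_step[OF admissible_below_all assms(1)] by (simp add: \<nu>_def)
  then have "restr (Phi L \<sigma> w) n = take n (restr (Phi L \<nu> (seq_tl w)) (length \<nu>))"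
    using \<nu>(2) by (simp add: take_restr)
  also have "\<dots> = take n \<nu>" using restr_Phi[OF \<nu>(1)] by simp
  finally have "map (trunc c) (restr (Phi L \<sigma> w) n) =
      map (trunc c) (restr (Phi (enat c) (thin \<sigma>) (seq_tl w)) n)"
    using \<nu>(3) pattern_eq_Phi[OF admissible_below_all assms(1)] by (simp add: n_def)
  then show ?thesis by (simp add: map_trunc_restr_eq_iff n_def)
qed

section \<open>Continuity and injectivity of the construction\<close>

text \<open>The levels \<open>l \<le> L\<close> only take different branches on a digit \<open>c\<close> with \<open>l \<le> c < L\<close>; there
  \<open>Phi_approximates\<close> makes up for the difference.\<close>

lemma step_eq_lower_level:
  assumes "enat l \<le> L" "\<not> (\<exists>c. w 0 = enat c \<and> l \<le> c \<and> enat c < L)"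
  shows "step A L \<sigma> w = step A (enat l) \<sigma> w"
proof (cases "w 0 < enat l")
  case True
  then show ?thesis using assms(1) by (simp add: step_def less_le_trans)
next
  case False
  have "\<not> w 0 < L"
  proof
    assume "w 0 < L"
    then obtain c where "w 0 = enat c" by (cases "w 0") auto
    then show False using assms(2) False \<open>w 0 < L\<close> by simp
  qed
  then show ?thesis using False by (simp add: step_def)
qed

lemma Phi_agree_lower_level:
  assumes "enat l \<le> L" "d \<le> l" "\<sigma> \<in> T"
  shows "trunc_agree l (length \<sigma> + d) (Phi L \<sigma> w) (Phi (enat l) \<sigma> w)"
  using assms
proof (induction d arbitrary: \<sigma> w L)
  case 0
  then show ?case by (simp add: trunc_agree_def Phi_nth_node)
next
  case (Suc d)
  have lL: "enat l \<le> L" and d: "d \<le> l" and \<sigma>: "\<sigma> \<in> T" using Suc.prems by simp_all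
  show ?case
  proof (cases "\<exists>c. w 0 = enat c \<and> l \<le> c \<and> enat c < L")
    case True
    then obtain c where c: "w 0 = enat c" "l \<le> c" "enat c < L" by blast
    have len: "length \<sigma> < length (thin \<sigma>)" using thin(3)[OF \<sigma>] .
    have "trunc_agree c (length (thin \<sigma>) + c) (Phi L \<sigma> w) (Phi (enat c) (thin \<sigma>) (seq_tl w))"
      using Phi_approximates[of \<sigma> w c L] \<sigma> c(1,3) by blast
    then have A: "trunc_agree l (length \<sigma> + Suc d) (Phi L \<sigma> w) (Phi (enat c) (thin \<sigma>) (seq_tl w))"
      using c(2) len d by (elim trunc_agree_mono) simp_all
    have "trunc_agree l (length (thin \<sigma>) + d)
        (Phi (enat c) (thin \<sigma>) (seq_tl w)) (Phi (enat l) (thin \<sigma>) (seq_tl w))"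
      using Suc.IH[of "enat c" "thin \<sigma>"] c(2) d thin(1)[OF \<sigma>] by simp
    then have B: "trunc_agree l (length \<sigma> + Suc d)
        (Phi (enat c) (thin \<sigma>) (seq_tl w)) (Phi (enat l) (thin \<sigma>) (seq_tl w))"
      using len by (elim trunc_agree_le) simp
    have "Phi (enat l) \<sigma> w = Phi (enat l) (thin \<sigma>) (seq_tl w)"
      using Phi_step[OF admissible_below_all \<sigma>, of "enat l" w] c(1,2) by (simp add: step_def)
    then show ?thesis using trunc_agree_trans[OF A B] by simp
  next
    case False
    have eq: "step choice L \<sigma> w = step choice (enat l) \<sigma> w"
      using step_eq_lower_level[of l L w, OF lL False] .
    define \<nu> where "\<nu> = step choice L \<sigma> w"
    have \<nu>: "\<nu> \<in> T" "length \<sigma> < length \<nu>"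
      using step_in_T[OF admissible_below_all \<sigma>] by (simp_all add: \<nu>_def)
    have "Phi L \<sigma> w = Phi L \<nu> (seq_tl w)" "Phi (enat l) \<sigma> w = Phi (enat l) \<nu> (seq_tl w)"
      using Phi_step[OF admissible_below_all \<sigma>] eq by (simp_all add: \<nu>_def)
    then have "trunc_agree l (length \<nu> + d) (Phi L \<sigma> w) (Phi (enat l) \<sigma> w)"
      using Suc.IH[OF lL d \<nu>(1)] by simp
    then show ?thesis using \<nu>(2) by (elim trunc_agree_le) simp
  qed
qed

lemma step_fin_locally_constant:
  assumes "\<sigma> \<in> T"
    and cont: "\<And>c \<sigma>' v. c < l \<Longrightarrow> \<sigma>' \<in> T \<Longrightarrow> \<exists>M. \<forall>v'. trunc_agree M M v v' \<longrightarrow>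
        trunc_agree c (length \<sigma>' + c) (Phi (enat c) \<sigma>' v) (Phi (enat c) \<sigma>' v')"
  shows "\<exists>M. \<forall>w'. trunc_agree M M w w' \<longrightarrow> step choice (enat l) \<sigma> w' = step choice (enat l) \<sigma> w"
proof (cases "w 0 < enat l")
  case True
  then obtain c where c: "w 0 = enat c" "c < l" by (cases "w 0") auto
  obtain M where M: "\<forall>v'. trunc_agree M M (seq_tl w) v' \<longrightarrow> trunc_agree c (length (thin \<sigma>) + c)
      (Phi (enat c) (thin \<sigma>) (seq_tl w)) (Phi (enat c) (thin \<sigma>) v')"
    using cont[OF c(2) thin(1)[OF assms(1)]] by blast
  have "step choice (enat l) \<sigma> w' = step choice (enat l) \<sigma> w"
    if a: "trunc_agree (Suc (max M l)) (Suc (max M l)) w w'" for w'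
  proof -
    have "w' 0 = w 0" using trunc_agree_head_below[OF a True] by simp
    moreover have "trunc_agree (max M l) (max M l) (seq_tl w) (seq_tl w')"
      using trunc_agree_tail[OF a] by simp
    then have "trunc_agree M M (seq_tl w) (seq_tl w')" by (rule trunc_agree_mono) simp_all
    then have "pattern choice c \<sigma> (seq_tl w') = pattern choice c \<sigma> (seq_tl w)"
      using M pattern_eq_Phi[OF admissible_below_all assms(1)]
      by (simp add: map_trunc_restr_eq_iff trunc_agree_sym)
    ultimately show ?thesis using c True by (simp add: step_def)
  qed
  then show ?thesis by blast
next
  case False
  have "step choice (enat l) \<sigma> w' = step choice (enat l) \<sigma> w" if a: "trunc_agree (Suc l) (Suc l) w w'" for w'
  proof -
    have "enat l \<le> w' 0" using trunc_agree_head_above[OF a] False by simp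
    then have "\<not> w' 0 < enat l" by (simp add: not_less)
    then show ?thesis using False by (simp add: step_def)
  qed
  then show ?thesis by blast
qed

lemma Phi_level_continuous:
  "\<sigma> \<in> T \<Longrightarrow> \<exists>M. \<forall>w'. trunc_agree M M w w' \<longrightarrow>
     trunc_agree l (length \<sigma> + d) (Phi (enat l) \<sigma> w) (Phi (enat l) \<sigma> w')"
proof (induction l arbitrary: \<sigma> w d rule: less_induct)
  case (less l)
  from less.prems show ?case
  proof (induction d arbitrary: \<sigma> w)
    case 0
    then show ?case by (intro exI[of _ 0]) (simp add: trunc_agree_def Phi_nth_node)
  next
    case (Suc d)
    have cont: "\<exists>M. \<forall>v'. trunc_agree M M v v' \<longrightarrow>
        trunc_agree c (length \<sigma>' + c) (Phi (enat c) \<sigma>' v) (Phi (enat c) \<sigma>' v')"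
      if "c < l" "\<sigma>' \<in> T" for c \<sigma>' v
      using that by (rule less.IH)
    obtain M1 where M1: "\<forall>w'. trunc_agree M1 M1 w w' \<longrightarrow>
        step choice (enat l) \<sigma> w' = step choice (enat l) \<sigma> w"
      using step_fin_locally_constant[OF Suc.prems cont] by blast
    define \<nu> where "\<nu> = step choice (enat l) \<sigma> w"
    have \<nu>: "\<nu> \<in> T" "length \<sigma> < length \<nu>"
      using step_in_T[OF admissible_below_all Suc.prems] by (simp_all add: \<nu>_def)
    obtain M2 where M2: "\<forall>v. trunc_agree M2 M2 (seq_tl w) v \<longrightarrow>
        trunc_agree l (length \<nu> + d) (Phi (enat l) \<nu> (seq_tl w)) (Phi (enat l) \<nu> v)"
      using Suc.IH[OF \<nu>(1)] by blast
    define M where "M = Suc (max M1 M2)"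
    have "trunc_agree l (length \<sigma> + Suc d) (Phi (enat l) \<sigma> w) (Phi (enat l) \<sigma> w')"
      if a: "trunc_agree M M w w'" for w'
    proof -
      have "trunc_agree M1 M1 w w'" using a by (rule trunc_agree_mono) (simp_all add: M_def)
      then have "step choice (enat l) \<sigma> w' = \<nu>" using M1 unfolding \<nu>_def by blast
      moreover have "trunc_agree (max M1 M2) (max M1 M2) (seq_tl w) (seq_tl w')"
        using trunc_agree_tail[OF a] by (simp add: M_def)
      then have "trunc_agree M2 M2 (seq_tl w) (seq_tl w')" by (rule trunc_agree_mono) simp_all
      then have "trunc_agree l (length \<nu> + d) (Phi (enat l) \<nu> (seq_tl w)) (Phi (enat l) \<nu> (seq_tl w'))"
        using M2 by blast
      ultimately have "trunc_agree l (length \<nu> + d) (Phi (enat l) \<sigma> w) (Phi (enat l) \<sigma> w')"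
        using Phi_step[OF admissible_below_all Suc.prems] by (simp add: \<nu>_def)
      then show ?thesis using \<nu>(2) by (elim trunc_agree_le) simp
    qed
    then show ?case by blast
  qed
qed

lemma Phi_inf_continuous:
  assumes "\<sigma> \<in> T"
  shows "\<exists>M. \<forall>w'. trunc_agree M M w w' \<longrightarrow> trunc_agree l (length \<sigma> + l) (Phi \<infinity> \<sigma> w) (Phi \<infinity> \<sigma> w')"
proof -
  obtain M where M: "\<forall>w'. trunc_agree M M w w' \<longrightarrow>
      trunc_agree l (length \<sigma> + l) (Phi (enat l) \<sigma> w) (Phi (enat l) \<sigma> w')"
    using Phi_level_continuous[OF assms] by blast
  have lower: "trunc_agree l (length \<sigma> + l) (Phi \<infinity> \<sigma> v) (Phi (enat l) \<sigma> v)" for v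
    using Phi_agree_lower_level[OF _ _ assms] by simp
  have "trunc_agree l (length \<sigma> + l) (Phi \<infinity> \<sigma> w) (Phi \<infinity> \<sigma> w')" if "trunc_agree M M w w'" for w'
    using trunc_agree_trans[OF trunc_agree_trans[OF lower[of w] M[rule_format, OF that]]
        trunc_agree_sym[OF lower[of w']]] .
  then show ?thesis by blast
qed

lemma step_inf_locally_constant:
  assumes "\<sigma> \<in> T"
  shows "\<exists>M. \<forall>w'. (\<forall>i<M. w' i = w i) \<longrightarrow> step choice \<infinity> \<sigma> w' = step choice \<infinity> \<sigma> w"
proof (cases "w 0")
  case (enat c)
  obtain M where M: "\<forall>v. trunc_agree M M (seq_tl w) v \<longrightarrow> trunc_agree c (length (thin \<sigma>) + c)
      (Phi (enat c) (thin \<sigma>) (seq_tl w)) (Phi (enat c) (thin \<sigma>) v)"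
    using Phi_level_continuous[OF thin(1)[OF assms]] by blast
  have "step choice \<infinity> \<sigma> w' = step choice \<infinity> \<sigma> w" if a: "\<forall>i<Suc M. w' i = w i" for w'
  proof -
    have "trunc_agree M M (seq_tl w) (seq_tl w')" using a by (simp add: trunc_agree_def seq_tl_def)
    then have "pattern choice c \<sigma> (seq_tl w') = pattern choice c \<sigma> (seq_tl w)"
      using M pattern_eq_Phi[OF admissible_below_all assms]
      by (simp add: map_trunc_restr_eq_iff trunc_agree_sym)
    moreover have "w' 0 = w 0" using a by simp
    ultimately show ?thesis using enat by (simp add: step_def)
  qed
  then show ?thesis by blast
next
  case infinity
  then have "step choice \<infinity> \<sigma> w' = step choice \<infinity> \<sigma> w" if "\<forall>i<1. w' i = w i" for w'
    using that by (simp add: step_def)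
  then show ?thesis by blast
qed

lemma Phi_inf_prefix_determined:
  "\<sigma> \<in> T \<Longrightarrow> \<exists>M. \<forall>w'. (\<forall>i<M. w' i = w i) \<longrightarrow> (\<forall>i<length \<sigma> + d. Phi \<infinity> \<sigma> w' i = Phi \<infinity> \<sigma> w i)"
proof (induction d arbitrary: \<sigma> w)
  case 0
  then show ?case by (intro exI[of _ 0]) (simp add: Phi_nth_node)
next
  case (Suc d)
  obtain M1 where M1: "\<forall>w'. (\<forall>i<M1. w' i = w i) \<longrightarrow> step choice \<infinity> \<sigma> w' = step choice \<infinity> \<sigma> w"
    using step_inf_locally_constant[OF Suc.prems] by blast
  define \<nu> where "\<nu> = step choice \<infinity> \<sigma> w"
  have \<nu>: "\<nu> \<in> T" "length \<sigma> < length \<nu>"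
    using step_in_T[OF admissible_below_all Suc.prems] by (simp_all add: \<nu>_def)
  obtain M2 where M2: "\<forall>v. (\<forall>i<M2. v i = seq_tl w i) \<longrightarrow>
      (\<forall>i<length \<nu> + d. Phi \<infinity> \<nu> v i = Phi \<infinity> \<nu> (seq_tl w) i)"
    using Suc.IH[OF \<nu>(1)] by blast
  have "\<forall>i<length \<sigma> + Suc d. Phi \<infinity> \<sigma> w' i = Phi \<infinity> \<sigma> w i"
    if a: "\<forall>i<Suc (max M1 M2). w' i = w i" for w'
  proof -
    have "\<forall>i<M1. w' i = w i" using a by simp
    then have "step choice \<infinity> \<sigma> w' = \<nu>" using M1 unfolding \<nu>_def by blast
    moreover have "\<forall>i<M2. seq_tl w' i = seq_tl w i" using a by (simp add: seq_tl_def)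
    then have "\<forall>i<length \<nu> + d. Phi \<infinity> \<nu> (seq_tl w') i = Phi \<infinity> \<nu> (seq_tl w) i"
      using M2 by blast
    ultimately have "\<forall>i<length \<nu> + d. Phi \<infinity> \<sigma> w' i = Phi \<infinity> \<sigma> w i"
      using Phi_step[OF admissible_below_all Suc.prems] by (simp add: \<nu>_def)
    then show ?thesis using \<nu>(2) by simp
  qed
  then show ?case by blast
qed

lemma choice_parallel:
  assumes "\<sigma> \<in> T" "\<beta> \<in> patterns choice c \<sigma>" "\<beta>' \<in> patterns choice c' \<sigma>" "(c, \<beta>) \<noteq> (c', \<beta>')"
  shows "choice c \<sigma> \<beta> \<parallel> choice c' \<sigma> \<beta>'"
proof -
  consider "c < c'" | "c' < c" | "c = c'" "\<beta> \<noteq> \<beta>'"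
    using assms(4) by (cases rule: linorder_cases[of c c']) auto
  then show ?thesis
  proof cases
    case 1
    then show ?thesis
      using admissibleD(6)[OF admissible_choice[OF assms(1)] assms(3) 1 assms(2)]
      by (simp add: parallel_commute)
  next
    case 2
    show ?thesis using admissibleD(6)[OF admissible_choice[OF assms(1)] assms(2) 2 assms(3)] .
  next
    case 3
    then show ?thesis using admissibleD(7)[OF admissible_choice[OF assms(1)] assms(2)] assms(3) by simp
  qed
qed

lemma step_inf_eq_or_parallel:
  assumes "\<sigma> \<in> T"
  shows "(w' 0 = w 0 \<and> step choice \<infinity> \<sigma> w' = step choice \<infinity> \<sigma> w) \<or>
    step choice \<infinity> \<sigma> w' \<parallel> step choice \<infinity> \<sigma> w"
proof (cases "w 0")
  case (enat c)
  show ?thesis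
  proof (cases "w' 0")
    case (enat c')
    then show ?thesis
      using choice_parallel[OF assms pattern_in_patterns[of choice c' \<sigma> "seq_tl w'"]
          pattern_in_patterns[of choice c \<sigma> "seq_tl w"]] \<open>w 0 = enat c\<close>
      by (cases "(c', pattern choice c' \<sigma> (seq_tl w')) = (c, pattern choice c \<sigma> (seq_tl w))")
        (auto simp: step_def)
  next
    case infinity
    then show ?thesis
      using admissibleD(3)[OF admissible_choice[OF assms] pattern_in_patterns[of choice c \<sigma> "seq_tl w"]] enat
      by (simp add: step_def parallel_commute)
  qed
next
  case infinity
  show ?thesis
  proof (cases "w' 0")
    case (enat c')
    then show ?thesis
      using admissibleD(3)[OF admissible_choice[OF assms] pattern_in_patterns[of choice c' \<sigma> "seq_tl w'"]] infinity
      by (simp add: step_def)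
  next
    case infinity
    then show ?thesis using \<open>w 0 = \<infinity>\<close> by (simp add: step_def)
  qed
qed

lemma Phi_inf_prefix_determines:
  "\<sigma> \<in> T \<Longrightarrow> \<exists>M. \<forall>w'. (\<forall>i<M. Phi \<infinity> \<sigma> w' i = Phi \<infinity> \<sigma> w i) \<longrightarrow> (\<forall>i<n. w' i = w i)"
proof (induction n arbitrary: \<sigma> w)
  case 0
  then show ?case by simp
next
  case (Suc n)
  define \<nu> where "\<nu> = step choice \<infinity> \<sigma> w"
  have \<nu>: "\<nu> \<in> T" using step_in_T[OF admissible_below_all Suc.prems] by (simp add: \<nu>_def)
  obtain M where M: "\<forall>v. (\<forall>i<M. Phi \<infinity> \<nu> v i = Phi \<infinity> \<nu> (seq_tl w) i) \<longrightarrow> (\<forall>i<n. v i = seq_tl w i)"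
    using Suc.IH[OF \<nu>] by blast
  have "\<forall>i<Suc n. w' i = w i" if a: "\<forall>i<max (length \<nu>) M. Phi \<infinity> \<sigma> w' i = Phi \<infinity> \<sigma> w i" for w'
  proof -
    define \<nu>' where "\<nu>' = step choice \<infinity> \<sigma> w'"
    have \<nu>': "\<nu>' \<in> T" using step_in_T[OF admissible_below_all Suc.prems] by (simp add: \<nu>'_def)
    have P: "Phi \<infinity> \<sigma> w = Phi \<infinity> \<nu> (seq_tl w)" "Phi \<infinity> \<sigma> w' = Phi \<infinity> \<nu>' (seq_tl w')"
      using Phi_step[OF admissible_below_all Suc.prems] by (simp_all add: \<nu>_def \<nu>'_def)
    have "Phi \<infinity> \<sigma> w' \<in> cyl \<nu>'"
      using Phi_in_lim[OF admissible_below_all \<nu>'] P(2) by simp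
    moreover have "Phi \<infinity> \<sigma> w' \<in> cyl \<nu>"
      using a P(1) Phi_nth_node[OF \<nu>] by (simp add: cyl_iff)
    ultimately have "\<not> \<nu>' \<parallel> \<nu>" using parallel_cyl_disjoint by blast
    then have "w' 0 = w 0" "\<nu>' = \<nu>"
      using step_inf_eq_or_parallel[OF Suc.prems, of w' w] by (simp_all add: \<nu>_def \<nu>'_def)
    then have "\<forall>i<M. Phi \<infinity> \<nu> (seq_tl w') i = Phi \<infinity> \<nu> (seq_tl w) i" using a P by simp
    then have "\<forall>i<n. seq_tl w' i = seq_tl w i" using M by blast
    then show ?thesis using \<open>w' 0 = w 0\<close> by (auto simp: seq_tl_def less_Suc_eq_0_disj)
  qed
  then show ?case by blast
qed

end

theorem mainTheorem3:
  fixes D :: "(nat \<Rightarrow> enat) set"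
  assumes "wide_set D"
  shows "\<exists>\<phi> \<psi>. embedding_map cantor_top (subtopology cantor_top D) \<phi> \<and>
                embedding_map baire_top (subtopology baire_top (P_map ` D)) \<psi> \<and>
                (\<forall>x. \<psi> (P_map x) = P_map (\<phi> x))"
proof -
  obtain T where T: "wide_tree T" and D: "D = lim_tree T"
    using assms by (auto simp: wide_set_def)
  interpret wide_tree_embedding T using T by unfold_locales
  define \<phi> where "\<phi> = Phi \<infinity> []"
  have range: "range \<phi> \<subseteq> D"
    using Phi_in_lim[OF admissible_below_all Nil_in_T] by (auto simp: \<phi>_def D)
  have determines: "\<exists>M. \<forall>w'. (\<forall>i<M. \<phi> w' i = \<phi> w i) \<longrightarrow> (\<forall>i<n. w' i = w i)" for w n
    using Phi_inf_prefix_determines[OF Nil_in_T] by (simp add: \<phi>_def)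
  have "continuous_on UNIV \<phi>"
    using Phi_inf_continuous[OF Nil_in_T] by (intro continuous_on_by_trunc_agree) (simp add: \<phi>_def)
  moreover have "inj \<phi>" using determines by (rule inj_if_prefix_determines)
  ultimately have "embedding_map cantor_top (subtopology cantor_top D) \<phi>"
    using range by (rule embedding_map_cantor_top)
  moreover have "embedding_map baire_top (subtopology baire_top (P_map ` D)) (\<lambda>z. P_map (\<phi> (P_inv z)))"
    using Phi_inf_prefix_determined[OF Nil_in_T] determines range
    by (intro embedding_map_baire_top_conj) (simp_all add: \<phi>_def)
  ultimately show ?thesis by (intro exI[of _ \<phi>] exI[of _ "\<lambda>z. P_map (\<phi> (P_inv z))"]) simp
qed

end
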